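(* There exist $R>0$ and $\upsilon\in(0,1)$, independent of $t$, such that for every $t>0$ there is a closed, real, positive $(1,1)$-form $\check\omega_t$ on $\tilde X$ satisfying: (1) $\check\omega_t=\tilde\omega_t$ on $\{p\in\tilde X: r(p)\le tR/2\}$; (2) $\check\omega_t=\hat\omega$ on a neighbourhood of $\{p\in\tilde X: r(p)\ge tR\}$; (3) $\check\omega_t^2\ge 2\upsilon^2\,\mathrm{vol}_0$ on $\tilde X\setminus\mathfrak{E}$, with equality holding at least on $\{p: r(p)=\mathfrak{r}_t\}$ for some $\mathfrak{r}_t\in(tR/2,tR)$.
   Context: Let $\tilde X=\{((U^1,U^2),[W^1:W^2])\in\mathbb{C}^2\times\mathbb{CP}^1: U^1(W^2)^2=U^2(W^1)^2\}\cong T^*\mathbb{CP}^1$, a complex surface, with the blow-down map $\rho:\tilde X\to\mathbb{C}^2/\{\pm1\}$, $((U^1,U^2),[W^1:W^2])\mapsto\pm(\sqrt{U^1},\sqrt{U^2})$ (square roots chosen with $\sqrt{U^1}W^2=\sqrt{U^2}W^1$); $\mathfrak{E}=\rho^{-1}(0)\cong\mathbb{CP}^1$, and $\rho$ identifies $\tilde X\setminus\mathfrak E$ biholomorphically with $(\mathbb{C}^2/\{\pm1\})\setminus\{0\}$. On $\mathbb{C}^2$ with coordinates $w^1=x^1+iy^1$, $w^2=x^2+iy^2$, put $r^2=|w^1|^2+|w^2|^2$ (pulled back to $\tilde X$ via $\rho$, with $r=0$ on $\mathfrak E$), $\hat\omega=\frac i2(dw^1\wedge d\bar w^1+dw^2\wedge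 d\bar w^2)$, $\mathrm{vol}_0=dx^1\wedge dy^1\wedge dx^2\wedge dy^2$. The Eguchi--Hanson forms are $\tilde\omega_t=\frac14dd^c\big[\sqrt{r^4+t^4}+t^2\log\big(\frac{r^2}{\sqrt{r^4+t^4}+t^2}\big)\big]$ on $\tilde X\setminus\mathfrak E$, where $d^c=i(\bar\partial-\partial)$; each $\tilde\omega_t$ ($t>0$) extends smoothly over $\mathfrak E$ to a Ricci-flat Kähler form on $\tilde X$. *)

theory Defs
  imports "HOL-Analysis.Analysis"
begin

text \<open>
Points of C^2 are vectors w :: complex^2 with coordinates w$1, w$2;
norm w = sqrt(|w1|^2 + |w2|^2) = r.  A (1,1)-form on an open subset of C^2 is
represented by its coefficient matrix H :: complex^2 \<Rightarrow> complex^2^2, meaning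
   omega = (i/2) * sum_{j,k} H(w)$j$k dw^j \<and> d(conj w^k).
With this convention the flat form hat-omega has coefficient matrix mat 1, and
(1/4) dd^c phi has coefficient matrix (d_j dbar_k phi).
The manifold X~ minus the exceptional curve E is identified (via rho) with
(C^2 - {0})/{+-1}; forms on it are the forms on C^2 - {0} invariant under w \<mapsto> -w.
\<close>

fun iter_dd :: "('a::real_normed_vector \<Rightarrow> 'b::real_normed_vector) \<Rightarrow> 'a list \<Rightarrow> 'a \<Rightarrow> 'b" where
  "iter_dd f [] = f"
| "iter_dd f (v # vs) = (\<lambda>x. frechet_derivative (iter_dd f vs) (at x) v)"

definition smooth_on :: "'a::real_normed_vector set \<Rightarrow> ('a \<Rightarrow> 'b::real_normed_vector) \<Rightarrow> bool" where
  "smooth_on S f \<longleftrightarrow> open S \<and> (\<forall>vs. \<forall>x\<in>S. iter_dd f vs differentiable (at x))"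

definition wirt :: "2 \<Rightarrow> (complex^2 \<Rightarrow> complex) \<Rightarrow> complex^2 \<Rightarrow> complex" where
  "wirt j f x = (frechet_derivative f (at x) (axis j 1)
                 - \<i> * frechet_derivative f (at x) (axis j \<i>)) / 2"

definition wirtbar :: "2 \<Rightarrow> (complex^2 \<Rightarrow> complex) \<Rightarrow> complex^2 \<Rightarrow> complex" where
  "wirtbar j f x = (frechet_derivative f (at x) (axis j 1)
                    + \<i> * frechet_derivative f (at x) (axis j \<i>)) / 2"

text \<open>Coefficient matrix of (1/4) dd^c phi, d^c = i(dbar - d): entries d_j dbar_k phi.\<close>
definition quarter_ddc :: "(complex^2 \<Rightarrow> real) \<Rightarrow> complex^2 \<Rightarrow> complex^2^2" where
  "quarter_ddc \<phi> x = (\<chi> j k. wirt j (wirtbar k (\<lambda>y. complex_of_real (\<phi> y))) x)"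

text \<open>Smooth, closed (1,1)-form on the open set S.  For
omega = (i/2) sum H_jk dw^j \<and> dbar w^k one has d omega = 0 iff
d_l H_jk = d_j H_lk and dbar_l H_jk = dbar_k H_jl for all j, k, l.\<close>
definition closed_form11_on :: "(complex^2) set \<Rightarrow> (complex^2 \<Rightarrow> complex^2^2) \<Rightarrow> bool" where
  "closed_form11_on S H \<longleftrightarrow>
     (\<forall>j k. smooth_on S (\<lambda>x. H x $ j $ k)) \<and>
     (\<forall>x\<in>S. \<forall>j k l. wirt l (\<lambda>y. H y $ j $ k) x = wirt j (\<lambda>y. H y $ l $ k) x
                 \<and> wirtbar l (\<lambda>y. H y $ j $ k) x = wirtbar k (\<lambda>y. H y $ j $ l) x)"

definition real_form11_on :: "(complex^2) set \<Rightarrow> (complex^2 \<Rightarrow> complex^2^2) \<Rightarrow> bool" where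
  "real_form11_on S H \<longleftrightarrow> (\<forall>x\<in>S. \<forall>j k. H x $ j $ k = cnj (H x $ k $ j))"

definition positive_form11_on :: "(complex^2) set \<Rightarrow> (complex^2 \<Rightarrow> complex^2^2) \<Rightarrow> bool" where
  "positive_form11_on S H \<longleftrightarrow>
     (\<forall>x\<in>S. \<forall>v::complex^2. v \<noteq> 0 \<longrightarrow>
         0 < Re (\<Sum>j\<in>UNIV. \<Sum>k\<in>UNIV. H x $ j $ k * v $ j * cnj (v $ k)))"

text \<open>Invariance under the deck transformation w \<mapsto> -w (so the form descends to
(C^2 - {0})/{+-1} = X~ - E).\<close>
definition pm_invariant :: "(complex^2 \<Rightarrow> complex^2^2) \<Rightarrow> bool" where
  "pm_invariant H \<longleftrightarrow> (\<forall>x. x \<noteq> 0 \<longrightarrow> H (- x) = H x)"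

text \<open>omega \<and> omega = wedge_sq_ratio H x * vol_0 at x, where
vol_0 = dx1 \<and> dy1 \<and> dx2 \<and> dy2 and omega = (i/2) sum H_jk dw^j \<and> dbar w^k.\<close>
definition wedge_sq_ratio :: "(complex^2 \<Rightarrow> complex^2^2) \<Rightarrow> complex^2 \<Rightarrow> real" where
  "wedge_sq_ratio H x = 2 * Re (det (H x))"

definition EH_potential :: "real \<Rightarrow> complex^2 \<Rightarrow> real" where
  "EH_potential t w = sqrt (norm w ^ 4 + t ^ 4)
      + t\<^sup>2 * ln (norm w ^ 2 / (sqrt (norm w ^ 4 + t ^ 4) + t\<^sup>2))"

definition EH_form :: "real \<Rightarrow> complex^2 \<Rightarrow> complex^2^2" where
  "EH_form t = quarter_ddc (EH_potential t)"

definition flat_form :: "complex^2 \<Rightarrow> complex^2^2" where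
  "flat_form x = mat 1"

end

(*
  All forms involved are radial.  For a profile a, the matrix
  a(r^2) delta_jk + a'(r^2) conj(w_j) w_k is the coefficient matrix of (1/4) dd^c Phi(r^2)
  with Phi' = a; it is closed and invariant under w -> -w, it is positive as soon as a > 0
  and (rho a)' > 0, and its determinant is a (rho a)'.  In the variable s = r^2/t^2 the
  Eguchi--Hanson profile is sqrt(s^2+1)/s and the flat one is 1, so we glue s a(s) from
  sqrt(s^2+1) to s by a cutoff supported in [A, 2A].  If A exceeds 2 + sup |cutoff'|, the
  derivative of the glued s a(s) stays positive.  The volume ratio a (s a)' equals 1 outside
  [A, 2A] and drops below 1 inside, because (s a)^2 - s^2 falls from 1 to 0 there; its minimum
  upsilon^2 is attained at some s_0 in [A, 2A], which gives r_t = t sqrt(s_0) and R = sqrt(3 A).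

  Smoothness is obtained without a chain rule for higher derivatives: every coefficient lies in
  an algebra generated by functions whose derivatives stay in the algebra.
*)

theory Submission
  imports Defs "HOL-Computational_Algebra.Polynomial"
begin

section \<open>Function algebras closed under differentiation\<close>

definition derivative_closed_on :: "real set \<Rightarrow> (real \<Rightarrow> real) set \<Rightarrow> bool" where
  "derivative_closed_on D K \<longleftrightarrow> (\<forall>f\<in>K. \<exists>f'\<in>K. \<forall>x\<in>D. (f has_real_derivative f' x) (at x))"

inductive_set fun_algebra :: "(real \<Rightarrow> real) set \<Rightarrow> (real \<Rightarrow> real) set" for G where
  const: "(\<lambda>x. c) \<in> fun_algebra G"
| generator: "g \<in> G \<Longrightarrow> g \<in> fun_algebra G"
| add: "f \<in> fun_algebra G \<Longrightarrow> g \<in> fun_algebra G \<Longrightarrow> (\<lambda>x. f x + g x) \<in> fun_algebra G"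
| mult: "f \<in> fun_algebra G \<Longrightarrow> g \<in> fun_algebra G \<Longrightarrow> (\<lambda>x. f x * g x) \<in> fun_algebra G"

lemma fun_algebra_diff:
  assumes "f \<in> fun_algebra G" "g \<in> fun_algebra G"
  shows "(\<lambda>x. f x - g x) \<in> fun_algebra G"
proof -
  have "(\<lambda>x. f x + (\<lambda>x. -1) x * g x) \<in> fun_algebra G"
    by (intro fun_algebra.add fun_algebra.mult fun_algebra.const assms)
  then show ?thesis by simp
qed

lemma derivative_closed_on_fun_algebra:
  assumes "\<And>g. g \<in> G \<Longrightarrow> \<exists>g'\<in>fun_algebra G. \<forall>x\<in>D. (g has_real_derivative g' x) (at x)"
  shows "derivative_closed_on D (fun_algebra G)"
  unfolding derivative_closed_on_def
proof
  fix f assume "f \<in> fun_algebra G"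
  then show "\<exists>f'\<in>fun_algebra G. \<forall>x\<in>D. (f has_real_derivative f' x) (at x)"
  proof induction
    case (const c)
    show ?case by (auto intro!: bexI[of _ "\<lambda>x. 0"] fun_algebra.const)
  next
    case (generator g)
    then show ?case using assms by blast
  next
    case (add f g)
    then obtain f' g' where "f' \<in> fun_algebra G" "g' \<in> fun_algebra G"
      "\<forall>x\<in>D. (f has_real_derivative f' x) (at x)" "\<forall>x\<in>D. (g has_real_derivative g' x) (at x)"
      by blast
    then show ?case
      by (intro bexI[of _ "\<lambda>x. f' x + g' x"]) (auto intro: fun_algebra.add derivative_eq_intros)
  next
    case (mult f g)
    then obtain f' g' where "f' \<in> fun_algebra G" "g' \<in> fun_algebra G"
      "\<forall>x\<in>D. (f has_real_derivative f' x) (at x)" "\<forall>x\<in>D. (g has_real_derivative g' x) (at x)"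
      by blast
    with mult.hyps show ?case
      by (intro bexI[of _ "\<lambda>x. f x * g' x + f' x * g x"])
         (auto intro!: fun_algebra.add fun_algebra.mult derivative_eq_intros)
  qed
qed

lemma derivative_closed_on_UNIV_deriv:
  assumes "derivative_closed_on UNIV K" "f \<in> K"
  shows "deriv f \<in> K" "(f has_real_derivative deriv f x) (at x)"
proof -
  obtain f' where f': "f' \<in> K" "\<And>x. (f has_real_derivative f' x) (at x)"
    using assms unfolding derivative_closed_on_def by blast
  then have "deriv f = f'" by (auto intro: DERIV_imp_deriv)
  with f' show "deriv f \<in> K" "(f has_real_derivative deriv f x) (at x)" by simp_all
qed

lemma derivative_closed_on_rescale:
  assumes K: "derivative_closed_on {0<..} (fun_algebra G)" and c: "c > 0"
  shows "derivative_closed_on {0<..} ((\<lambda>k \<rho>. k (\<rho> / c)) ` fun_algebra G)"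
  unfolding derivative_closed_on_def
proof
  fix f assume "f \<in> (\<lambda>k \<rho>. k (\<rho> / c)) ` fun_algebra G"
  then obtain k where k: "k \<in> fun_algebra G" "f = (\<lambda>\<rho>. k (\<rho> / c))" by blast
  obtain k' where k': "k' \<in> fun_algebra G" "\<forall>x>0. (k has_real_derivative k' x) (at x)"
    using K k(1) unfolding derivative_closed_on_def by auto
  have "(\<lambda>s. (\<lambda>s. 1 / c) s * k' s) \<in> fun_algebra G"
    by (intro fun_algebra.mult fun_algebra.const k'(1))
  moreover have "(f has_real_derivative k' (\<rho> / c) / c) (at \<rho>)" if "\<rho> > 0" for \<rho>
  proof -
    have "((\<lambda>\<rho>. k (\<rho> / c)) has_real_derivative k' (\<rho> / c) * (1 / c)) (at \<rho>)"
      using that c by (intro DERIV_chain2[of k] k'(2)[rule_format]) (auto intro!: derivative_eq_intros)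
    then show ?thesis by (simp add: k(2))
  qed
  ultimately show "\<exists>f'\<in>(\<lambda>k \<rho>. k (\<rho> / c)) ` fun_algebra G. \<forall>\<rho>\<in>{0<..}. (f has_real_derivative f' \<rho>) (at \<rho>)"
    by (intro bexI[of _ "\<lambda>\<rho>. k' (\<rho> / c) / c"]) (auto simp: image_iff)
qed

section \<open>A smooth cutoff function\<close>

definition exp_neg_inv :: "real poly \<Rightarrow> real \<Rightarrow> real" where
  "exp_neg_inv p x = (if x > 0 then poly p (1 / x) * exp (- (1 / x)) else 0)"

definition exp_neg_inv_deriv_poly :: "real poly \<Rightarrow> real poly" where
  "exp_neg_inv_deriv_poly p = [:0, 0, 1:] * (p - pderiv p)"

lemma exp_neg_inv_tendsto_0: "(exp_neg_inv p \<longlongrightarrow> 0) (at_right 0)"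
proof -
  have "((\<lambda>y. \<Sum>i\<le>degree p. coeff p i * (y ^ i / exp y)) \<longlongrightarrow> (\<Sum>i\<le>degree p. coeff p i * 0)) at_top"
    by (intro tendsto_sum tendsto_mult tendsto_const tendsto_power_div_exp_0)
  moreover have "(\<Sum>i\<le>degree p. coeff p i * (y ^ i / exp y)) = poly p y * exp (- y)" for y
    by (simp add: poly_altdef sum_divide_distrib[symmetric] exp_minus field_simps)
  ultimately have "((\<lambda>y. poly p y * exp (- y)) \<longlongrightarrow> 0) at_top" by simp
  from filterlim_compose[OF this filterlim_inverse_at_top_right]
  have "((\<lambda>x. poly p (inverse x) * exp (- inverse x)) \<longlongrightarrow> 0) (at_right 0)"
    by (simp add: o_def)
  moreover have "eventually (\<lambda>x. poly p (inverse x) * exp (- inverse x) = exp_neg_inv p x) (at_right 0)"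
    unfolding eventually_at_right_field exp_neg_inv_def
    by (rule exI[of _ 1]) (auto simp: divide_inverse)
  ultimately show ?thesis by (rule Lim_transform_eventually)
qed

lemma has_real_derivative_exp_neg_inv_0: "(exp_neg_inv p has_real_derivative 0) (at 0)"
proof -
  let ?q = "\<lambda>h. (exp_neg_inv p (0 + h) - exp_neg_inv p 0) / h"
  have "eventually (\<lambda>h. exp_neg_inv (p * [:0, 1:]) h = ?q h) (at_right 0)"
    unfolding eventually_at_right_field by (rule exI[of _ 1]) (auto simp: exp_neg_inv_def field_simps)
  from Lim_transform_eventually[OF exp_neg_inv_tendsto_0 this]
  have right: "(?q \<longlongrightarrow> 0) (at_right 0)" .
  have "eventually (\<lambda>h. 0 = ?q h) (at_left 0)"
    unfolding eventually_at_left_field by (rule exI[of _ "-1"]) (auto simp: exp_neg_inv_def)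
  then have left: "(?q \<longlongrightarrow> 0) (at_left 0)"
    by (rule Lim_transform_eventually[rotated]) simp
  show ?thesis
    unfolding DERIV_def by (rule filterlim_split_at[OF left right])
qed

lemma has_real_derivative_exp_neg_inv:
  "(exp_neg_inv p has_real_derivative exp_neg_inv (exp_neg_inv_deriv_poly p) x) (at x)"
proof (cases x "0 :: real" rule: linorder_cases)
  case less
  have "((\<lambda>x. 0) has_real_derivative 0) (at x)" by simp
  then have "(exp_neg_inv p has_real_derivative 0) (at x)"
    by (rule has_field_derivative_transform_within_open[where S="{..<0}"])
       (use less in \<open>auto simp: exp_neg_inv_def\<close>)
  with less show ?thesis by (simp add: exp_neg_inv_def)
next
  case equal
  with has_real_derivative_exp_neg_inv_0 show ?thesis by (simp add: exp_neg_inv_def)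
next
  case greater
  have "((\<lambda>x. poly p (1 / x) * exp (- (1 / x))) has_real_derivative
      poly (pderiv p) (1 / x) * (- 1 / x\<^sup>2) * exp (- (1 / x)) + poly p (1 / x) * (exp (- (1 / x)) * (1 / x\<^sup>2)))
      (at x)"
    using greater by (auto intro!: derivative_eq_intros DERIV_chain2[OF poly_DERIV] simp: power2_eq_square)
  moreover have "poly (pderiv p) (1 / x) * (- 1 / x\<^sup>2) * exp (- (1 / x))
      + poly p (1 / x) * (exp (- (1 / x)) * (1 / x\<^sup>2)) = exp_neg_inv (exp_neg_inv_deriv_poly p) x"
    using greater by (simp add: exp_neg_inv_def exp_neg_inv_deriv_poly_def algebra_simps power2_eq_square)
  ultimately have "((\<lambda>x. poly p (1 / x) * exp (- (1 / x))) has_real_derivative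
      exp_neg_inv (exp_neg_inv_deriv_poly p) x) (at x)"
    by simp
  then show ?thesis
    by (rule has_field_derivative_transform_within_open[where S="{0<..}"])
       (use greater in \<open>auto simp: exp_neg_inv_def\<close>)
qed

lemma has_real_derivative_exp_neg_inv_reflect:
  "((\<lambda>x. exp_neg_inv p (1 - x)) has_real_derivative - exp_neg_inv (exp_neg_inv_deriv_poly p) (1 - x)) (at x)"
proof -
  have "((\<lambda>x. exp_neg_inv p (1 - x)) has_real_derivative
      exp_neg_inv (exp_neg_inv_deriv_poly p) (1 - x) * (-1)) (at x)"
    by (rule DERIV_chain2[OF has_real_derivative_exp_neg_inv]) (auto intro!: derivative_eq_intros)
  then show ?thesis by simp
qed

definition cutoff_denom :: "real \<Rightarrow> real" where
  "cutoff_denom x = exp_neg_inv 1 x + exp_neg_inv 1 (1 - x)"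

definition cutoff :: "real \<Rightarrow> real" where
  "cutoff x = exp_neg_inv 1 x / cutoff_denom x"

lemma cutoff_denom_pos: "cutoff_denom x > 0"
  unfolding cutoff_denom_def exp_neg_inv_def by (cases "x > 0") (auto intro: add_pos_pos)

lemma cutoff_eq_0: "x \<le> 0 \<Longrightarrow> cutoff x = 0"
  by (simp add: cutoff_def exp_neg_inv_def)

lemma cutoff_eq_1: "x \<ge> 1 \<Longrightarrow> cutoff x = 1"
  using cutoff_denom_pos[of x] by (simp add: cutoff_def exp_neg_inv_def cutoff_denom_def)

lemma cutoff_bounds: "0 \<le> cutoff x" "cutoff x \<le> 1"
  using cutoff_denom_pos[of x] by (auto simp: cutoff_def exp_neg_inv_def cutoff_denom_def field_simps)

definition cutoff_generators :: "(real \<Rightarrow> real) set" where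
  "cutoff_generators = range exp_neg_inv \<union> range (\<lambda>p x. exp_neg_inv p (1 - x)) \<union> {\<lambda>x. 1 / cutoff_denom x}"

lemma has_real_derivative_cutoff_denom:
  "(cutoff_denom has_real_derivative
      exp_neg_inv (exp_neg_inv_deriv_poly 1) x - exp_neg_inv (exp_neg_inv_deriv_poly 1) (1 - x)) (at x)"
  unfolding cutoff_denom_def[abs_def]
  using DERIV_add[OF has_real_derivative_exp_neg_inv has_real_derivative_exp_neg_inv_reflect] by simp

lemma derivative_closed_cutoff_algebra: "derivative_closed_on UNIV (fun_algebra cutoff_generators)"
proof (rule derivative_closed_on_fun_algebra)
  let ?K = "fun_algebra cutoff_generators" and ?q = exp_neg_inv_deriv_poly
  have gen: "g \<in> ?K" if "g \<in> cutoff_generators" for g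
    using that by (rule fun_algebra.generator)
  fix g assume "g \<in> cutoff_generators"
  then consider p where "g = exp_neg_inv p" | p where "g = (\<lambda>x. exp_neg_inv p (1 - x))"
    | "g = (\<lambda>x. 1 / cutoff_denom x)"
    unfolding cutoff_generators_def by blast
  then show "\<exists>g'\<in>?K. \<forall>x\<in>UNIV. (g has_real_derivative g' x) (at x)"
  proof cases
    case 1
    have "exp_neg_inv (?q p) \<in> ?K" by (intro gen) (simp add: cutoff_generators_def)
    with 1 show ?thesis using has_real_derivative_exp_neg_inv by blast
  next
    case 2
    have "(\<lambda>x. (\<lambda>x. -1) x * (\<lambda>x. exp_neg_inv (?q p) (1 - x)) x) \<in> ?K"
      by (intro fun_algebra.mult fun_algebra.const gen) (auto simp: cutoff_generators_def)
    with 2 show ?thesis using has_real_derivative_exp_neg_inv_reflect[of p] by (intro bexI) auto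
  next
    case 3
    let ?d' = "\<lambda>x. exp_neg_inv (?q 1) x - exp_neg_inv (?q 1) (1 - x)"
    have "(\<lambda>x. (\<lambda>x. -1) x * (?d' x * ((\<lambda>x. 1 / cutoff_denom x) x * (\<lambda>x. 1 / cutoff_denom x) x))) \<in> ?K"
      by (intro fun_algebra.mult fun_algebra.const fun_algebra_diff gen) (auto simp: cutoff_generators_def)
    moreover have "cutoff_denom x \<noteq> 0" for x
      using cutoff_denom_pos[of x] by simp
    ultimately show ?thesis unfolding 3 using has_real_derivative_cutoff_denom
      by (intro bexI) (auto intro!: derivative_eq_intros simp: power2_eq_square field_simps)
  qed
qed

lemma cutoff_in_algebra: "cutoff \<in> fun_algebra cutoff_generators"
proof -
  have "(\<lambda>x. exp_neg_inv 1 x * (\<lambda>x. 1 / cutoff_denom x) x) \<in> fun_algebra cutoff_generators"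
    by (intro fun_algebra.mult fun_algebra.generator) (auto simp: cutoff_generators_def)
  then show ?thesis by (simp add: cutoff_def[abs_def])
qed

lemma has_real_derivative_cutoff: "(cutoff has_real_derivative deriv cutoff x) (at x)"
  by (rule derivative_closed_on_UNIV_deriv(2)[OF derivative_closed_cutoff_algebra cutoff_in_algebra])

lemma isCont_deriv_cutoff: "isCont (deriv cutoff) x"
proof -
  have "deriv cutoff \<in> fun_algebra cutoff_generators"
    by (rule derivative_closed_on_UNIV_deriv(1)[OF derivative_closed_cutoff_algebra cutoff_in_algebra])
  from derivative_closed_on_UNIV_deriv(2)[OF derivative_closed_cutoff_algebra this]
  show ?thesis by (rule DERIV_isCont)
qed

lemma deriv_cutoff_eq_0:
  assumes "x < 0 \<or> x > 1"
  shows "deriv cutoff x = 0"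
proof -
  have "eventually (\<lambda>y. cutoff y = (if x < 0 then 0 else 1)) (nhds x)"
  proof (cases "x < 0")
    case True
    then show ?thesis
      using eventually_nhds_in_open[of "{..<0}" x] by (auto elim!: eventually_mono intro: cutoff_eq_0)
  next
    case False
    then show ?thesis
      using assms eventually_nhds_in_open[of "{1<..}" x] by (auto elim!: eventually_mono intro: cutoff_eq_1)
  qed
  then show ?thesis by (simp add: deriv_cong_ev[of cutoff _ x x])
qed

lemma deriv_cutoff_bounded: "\<exists>M. \<forall>x. \<bar>deriv cutoff x\<bar> \<le> M"
proof -
  have "compact (deriv cutoff ` {0..1})"
    by (intro compact_continuous_image continuous_at_imp_continuous_on) (auto intro: isCont_deriv_cutoff)
  then obtain M where M: "\<forall>y\<in>deriv cutoff ` {0..1}. \<bar>y\<bar> \<le> M"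
    using compact_imp_bounded bounded_real by blast
  have "\<bar>deriv cutoff x\<bar> \<le> M" for x
    using M[rule_format, of "deriv cutoff x"] M[rule_format, of "deriv cutoff 0"] deriv_cutoff_eq_0[of x]
    by (cases "0 \<le> x \<and> x \<le> 1") auto
  then show ?thesis by blast
qed

section \<open>The glued profile\<close>

lemma sq_plus_one_pos [simp]: "0 < (s::real)\<^sup>2 + 1"
  by (simp add: add_nonneg_pos)

lemma sq_plus_one_nonzero [simp]: "(s::real)\<^sup>2 + 1 \<noteq> 0"
  using sq_plus_one_pos[of s] by linarith

lemma sqrt_sq_plus_one_gt: "s < sqrt (s\<^sup>2 + 1)"
  by (rule real_less_rsqrt) simp

lemma sqrt_sq_plus_one_minus_le:
  assumes "s > 0"
  shows "sqrt (s\<^sup>2 + 1) - s \<le> 1 / (2 * s)"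
proof -
  let ?u = "sqrt (s\<^sup>2 + 1)"
  have pos: "0 < ?u + s" using sqrt_sq_plus_one_gt[of s] assms by simp
  have "(?u - s) * (?u + s) = 1"
    by (simp add: algebra_simps power2_eq_square[symmetric] add_nonneg_pos)
  then have "?u - s = 1 / (?u + s)" using pos by (simp add: field_simps)
  also have "\<dots> \<le> 1 / (2 * s)"
    using sqrt_sq_plus_one_gt[of s] assms by (intro divide_left_mono) auto
  finally show ?thesis .
qed

lemma has_real_derivative_sqrt_sq_plus_one:
  "((\<lambda>s. sqrt (s\<^sup>2 + 1)) has_real_derivative s / sqrt (s\<^sup>2 + 1)) (at s)"
  using sq_plus_one_pos[of s] by (auto intro!: derivative_eq_intros simp: field_simps)

lemma has_real_derivative_inverse_sqrt_sq_plus_one: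
  "((\<lambda>s. 1 / sqrt (s\<^sup>2 + 1)) has_real_derivative
      - (s * (1 / sqrt (s\<^sup>2 + 1) * (1 / sqrt (s\<^sup>2 + 1) * (1 / sqrt (s\<^sup>2 + 1)))))) (at s)"
proof -
  have "sqrt (s\<^sup>2 + 1) \<noteq> 0" by simp
  from DERIV_inverse_fun[OF has_real_derivative_sqrt_sq_plus_one this]
  show ?thesis by (simp add: inverse_eq_divide field_simps power2_eq_square)
qed

text \<open>In the variable \<open>s = r\<^sup>2 / t\<^sup>2\<close>, \<open>eh_flat_interp A s\<close> is \<open>s\<close> times the profile of
  the glued form, and \<open>volume_ratio A s\<close> is the ratio of its square to \<open>2 vol\<^sub>0\<close>.\<close>

definition eh_flat_interp :: "real \<Rightarrow> real \<Rightarrow> real" where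
  "eh_flat_interp A s = s + (1 - cutoff ((s - A) / A)) * (sqrt (s\<^sup>2 + 1) - s)"

definition glued_profile :: "real \<Rightarrow> real \<Rightarrow> real" where
  "glued_profile A s = eh_flat_interp A s / s"

definition volume_ratio :: "real \<Rightarrow> real \<Rightarrow> real" where
  "volume_ratio A s = glued_profile A s * deriv (eh_flat_interp A) s"

lemma has_real_derivative_eh_flat_interp:
  assumes "A > 0"
  shows "(eh_flat_interp A has_real_derivative
      1 - deriv cutoff ((s - A) / A) / A * (sqrt (s\<^sup>2 + 1) - s)
        - (1 - cutoff ((s - A) / A)) * (1 - s / sqrt (s\<^sup>2 + 1))) (at s)"
proof -
  have "((\<lambda>s. cutoff ((s - A) / A)) has_real_derivative deriv cutoff ((s - A) / A) * (1 / A)) (at s)"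
    by (rule DERIV_chain2[OF has_real_derivative_cutoff]) (use assms in \<open>auto intro!: derivative_eq_intros\<close>)
  then have "(eh_flat_interp A has_real_derivative 1 + ((0 - deriv cutoff ((s - A) / A) * (1 / A))
      * (sqrt (s\<^sup>2 + 1) - s) + (s / sqrt (s\<^sup>2 + 1) - 1) * (1 - cutoff ((s - A) / A)))) (at s)"
    unfolding eh_flat_interp_def[abs_def]
    by (intro DERIV_add DERIV_ident DERIV_mult DERIV_diff DERIV_const
        has_real_derivative_sqrt_sq_plus_one)
  then show ?thesis by (simp add: algebra_simps)
qed

lemma deriv_eh_flat_interp:
  assumes "A > 0"
  shows "deriv (eh_flat_interp A) s = 1 - deriv cutoff ((s - A) / A) / A * (sqrt (s\<^sup>2 + 1) - s)
      - (1 - cutoff ((s - A) / A)) * (1 - s / sqrt (s\<^sup>2 + 1))"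
  by (rule DERIV_imp_deriv[OF has_real_derivative_eh_flat_interp[OF assms]])

lemma eh_flat_interp_small: "s \<le> A \<Longrightarrow> A > 0 \<Longrightarrow> eh_flat_interp A s = sqrt (s\<^sup>2 + 1)"
  by (simp add: eh_flat_interp_def cutoff_eq_0 divide_nonpos_pos)

lemma eh_flat_interp_large: "s \<ge> 2 * A \<Longrightarrow> A > 0 \<Longrightarrow> eh_flat_interp A s = s"
  by (simp add: eh_flat_interp_def cutoff_eq_1 field_simps)

lemma eh_flat_interp_ge: "s \<le> eh_flat_interp A s"
  using cutoff_bounds(2)[of "(s - A) / A"] sqrt_sq_plus_one_gt[of s] by (simp add: eh_flat_interp_def)

lemma deriv_eh_flat_interp_pos:
  assumes bound: "\<forall>x. \<bar>deriv cutoff x\<bar> \<le> A - 2" and s: "s > 0"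
  shows "deriv (eh_flat_interp A) s > 0"
proof -
  let ?u = "sqrt (s\<^sup>2 + 1)" and ?x = "(s - A) / A"
  have A: "A \<ge> 2" using bound by (metis abs_ge_zero diff_ge_0_iff_ge order_trans)
  have u: "s < ?u" "1 \<le> ?u" using sqrt_sq_plus_one_gt[of s] by auto
  then have u_nonzero: "?u \<noteq> 0" by linarith
  show ?thesis
  proof (cases "s < A")
    case True
    then have "?x < 0" using A by (simp add: divide_neg_pos)
    then have "deriv (eh_flat_interp A) s = s / ?u"
      using A by (simp add: deriv_eh_flat_interp cutoff_eq_0 deriv_cutoff_eq_0)
    moreover have "0 < ?u" using s u by linarith
    ultimately show ?thesis using s by simp
  next
    case False
    have small: "?u - s \<le> 1 / 4"
      using sqrt_sq_plus_one_minus_le[OF s] False A by (smt (verit) frac_le)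
    have "\<bar>deriv cutoff ?x\<bar> / A \<le> 1" using bound[rule_format, of ?x] A by (simp add: field_simps)
    then have "\<bar>deriv cutoff ?x\<bar> / A * (?u - s) \<le> 1 * (1 / 4)"
      using small u by (intro mult_mono) auto
    then have t1: "\<bar>deriv cutoff ?x / A * (?u - s)\<bar> \<le> 1 / 4"
      using u A by (simp add: abs_mult)
    moreover have t2: "(1 - cutoff ?x) * (1 - s / ?u) \<le> 1 / 4"
    proof -
      have "1 - s / ?u = (?u - s) / ?u" using u_nonzero by (simp add: diff_divide_distrib)
      also have "\<dots> \<le> (?u - s) / 1" using u by (intro divide_left_mono) auto
      finally have "1 - s / ?u \<le> 1 / 4" using small by simp
      moreover have "0 \<le> 1 - s / ?u" using u by simp
      ultimately show ?thesis
        using cutoff_bounds[of ?x] by (smt (verit) mult_left_le_one_le)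
    qed
    moreover have "deriv (eh_flat_interp A) s = 1 - deriv cutoff ?x / A * (?u - s) - (1 - cutoff ?x) * (1 - s / ?u)"
      using A by (intro deriv_eh_flat_interp) simp
    ultimately show ?thesis using abs_le_D1[OF t1] by linarith
  qed
qed

lemma glued_profile_ge_1: "s > 0 \<Longrightarrow> glued_profile A s \<ge> 1"
  using eh_flat_interp_ge[of s A] by (simp add: glued_profile_def)

lemma has_real_derivative_glued_profile:
  assumes "A > 0" "s > 0"
  shows "(glued_profile A has_real_derivative
           (deriv (eh_flat_interp A) s - glued_profile A s) / s) (at s)"
proof -
  have "(eh_flat_interp A has_real_derivative deriv (eh_flat_interp A) s) (at s)"
    using has_real_derivative_eh_flat_interp[OF assms(1)] by (simp add: deriv_eh_flat_interp[OF assms(1)])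
  then show ?thesis
    unfolding glued_profile_def[abs_def] using assms
    by (auto intro!: derivative_eq_intros simp: field_simps power2_eq_square)
qed

lemma glued_profile_add_deriv:
  assumes "A > 0" "s > 0"
  shows "glued_profile A s + s * deriv (glued_profile A) s = deriv (eh_flat_interp A) s"
  using DERIV_imp_deriv[OF has_real_derivative_glued_profile[OF assms]] assms(2) by simp

lemma volume_ratio_eq_1:
  assumes "A > 0" "s > 0" "s < A \<or> s > 2 * A"
  shows "volume_ratio A s = 1"
  using assms(3)
proof
  assume "s < A"
  then have "(s - A) / A < 0" using assms(1) by (simp add: divide_neg_pos)
  then show ?thesis
    using assms sqrt_sq_plus_one_gt[of s] \<open>s < A\<close>
    by (simp add: volume_ratio_def glued_profile_def eh_flat_interp_small deriv_eh_flat_interp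
        cutoff_eq_0 deriv_cutoff_eq_0)
next
  assume "s > 2 * A"
  then have "(s - A) / A > 1" using assms(1) by (simp add: field_simps)
  then show ?thesis
    using assms \<open>s > 2 * A\<close>
    by (simp add: volume_ratio_def glued_profile_def eh_flat_interp_large deriv_eh_flat_interp
        cutoff_eq_1 deriv_cutoff_eq_0)
qed

lemma volume_ratio_dip:
  assumes A: "A > 0"
  shows "\<exists>s. A < s \<and> s < 2 * A \<and> volume_ratio A s < 1"
proof -
  let ?g = "eh_flat_interp A"
  have "((\<lambda>s. (?g s)\<^sup>2 - s\<^sup>2) has_real_derivative 2 * ?g s * deriv ?g s - 2 * s) (at s)" for s
    using has_real_derivative_eh_flat_interp[OF A, of s]
    by (auto intro!: derivative_eq_intros simp: deriv_eh_flat_interp[OF A])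
  from MVT2[of A "2 * A", OF _ this] A obtain z where
    z: "A < z" "z < 2 * A"
       "(?g (2 * A))\<^sup>2 - (2 * A)\<^sup>2 - ((?g A)\<^sup>2 - A\<^sup>2) = (2 * A - A) * (2 * ?g z * deriv ?g z - 2 * z)"
    by auto
  have "(?g (2 * A))\<^sup>2 - (2 * A)\<^sup>2 = 0" "(?g A)\<^sup>2 - A\<^sup>2 = 1"
    using A by (simp_all add: eh_flat_interp_large eh_flat_interp_small)
  with z have "A * (2 * ?g z * deriv ?g z - 2 * z) < 0" by simp
  with A have "?g z * deriv ?g z < z" by (simp add: mult_less_0_iff)
  then have "volume_ratio A z < 1"
    using z A by (simp add: volume_ratio_def glued_profile_def)
  with z show ?thesis by blast
qed

lemma isCont_volume_ratio:
  assumes "A > 0" "s > 0"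
  shows "isCont (volume_ratio A) s"
proof -
  have "isCont (glued_profile A) s"
    using has_real_derivative_glued_profile[OF assms] by (rule DERIV_isCont)
  moreover have "isCont (deriv (eh_flat_interp A)) s"
    unfolding deriv_eh_flat_interp[OF assms(1), abs_def]
    by (intro continuous_intros isCont_o2[OF _ isCont_deriv_cutoff]
        isCont_o2[OF _ DERIV_isCont[OF has_real_derivative_cutoff]]) (use assms in auto)
  ultimately show ?thesis unfolding volume_ratio_def[abs_def] by (intro continuous_intros)
qed

lemma volume_ratio_pos:
  assumes "\<forall>x. \<bar>deriv cutoff x\<bar> \<le> A - 2" "s > 0"
  shows "volume_ratio A s > 0"
  unfolding volume_ratio_def
  using glued_profile_ge_1[OF assms(2), of A] deriv_eh_flat_interp_pos[OF assms] by simp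

lemma volume_ratio_minimum:
  assumes bound: "\<forall>x. \<bar>deriv cutoff x\<bar> \<le> A - 2"
  shows "\<exists>s\<^sub>0. A \<le> s\<^sub>0 \<and> s\<^sub>0 \<le> 2 * A \<and> 0 < volume_ratio A s\<^sub>0 \<and> volume_ratio A s\<^sub>0 < 1 \<and>
           (\<forall>s>0. volume_ratio A s\<^sub>0 \<le> volume_ratio A s)"
proof -
  have A: "A > 0" using bound[rule_format, of 0] by linarith
  have "continuous_on {A..2 * A} (volume_ratio A)"
    using A by (auto intro!: continuous_at_imp_continuous_on isCont_volume_ratio)
  then obtain s\<^sub>0 where s\<^sub>0: "A \<le> s\<^sub>0" "s\<^sub>0 \<le> 2 * A" "\<forall>s\<in>{A..2 * A}. volume_ratio A s\<^sub>0 \<le> volume_ratio A s"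
    using continuous_attains_inf[of "{A..2 * A}" "volume_ratio A"] A by auto
  obtain z where z: "A < z" "z < 2 * A" "volume_ratio A z < 1" using volume_ratio_dip[OF A] by blast
  have "volume_ratio A s\<^sub>0 \<le> volume_ratio A z" using s\<^sub>0(3) z by simp
  with z have less_1: "volume_ratio A s\<^sub>0 < 1" by linarith
  have "volume_ratio A s\<^sub>0 \<le> volume_ratio A s" if "s > 0" for s
  proof (cases "s \<in> {A..2 * A}")
    case False
    with volume_ratio_eq_1[OF A that] less_1 show ?thesis by force
  qed (use s\<^sub>0 in auto)
  with s\<^sub>0 less_1 volume_ratio_pos[OF bound, of s\<^sub>0] A show ?thesis by auto
qed

definition glued_profile_generators :: "real \<Rightarrow> (real \<Rightarrow> real) set" where
  "glued_profile_generators A =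
     {\<lambda>s. s, \<lambda>s. 1 / s, \<lambda>s. sqrt (s\<^sup>2 + 1), \<lambda>s. 1 / sqrt (s\<^sup>2 + 1)}
     \<union> {\<lambda>s. k ((s - A) / A) | k. k \<in> fun_algebra cutoff_generators}"

lemma derivative_closed_glued_profile_algebra:
  assumes A: "A > 0"
  shows "derivative_closed_on {0<..} (fun_algebra (glued_profile_generators A))"
proof (rule derivative_closed_on_fun_algebra)
  let ?K = "fun_algebra (glued_profile_generators A)" and ?v = "\<lambda>s. 1 / sqrt (s\<^sup>2 + 1)"
  have gen: "g \<in> ?K" if "g \<in> glued_profile_generators A" for g
    using that by (rule fun_algebra.generator)
  fix g assume "g \<in> glued_profile_generators A"
  then consider "g = (\<lambda>s. s)" | "g = (\<lambda>s. 1 / s)" | "g = (\<lambda>s. sqrt (s\<^sup>2 + 1))" | "g = ?v"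
    | k where "k \<in> fun_algebra cutoff_generators" "g = (\<lambda>s. k ((s - A) / A))"
    unfolding glued_profile_generators_def by blast
  then show "\<exists>g'\<in>?K. \<forall>x\<in>{0<..}. (g has_real_derivative g' x) (at x)"
  proof cases
    case 1
    then show ?thesis by (intro bexI[of _ "\<lambda>x. 1"]) (auto intro: fun_algebra.const)
  next
    case 2
    have "(\<lambda>x. (\<lambda>x. -1) x * ((\<lambda>s. 1 / s) x * (\<lambda>s. 1 / s) x)) \<in> ?K"
      by (intro fun_algebra.mult fun_algebra.const gen) (auto simp: glued_profile_generators_def)
    with 2 show ?thesis
      by (intro bexI) (auto intro!: derivative_eq_intros simp: power2_eq_square)
  next
    case 3
    have "(\<lambda>x. (\<lambda>s. s) x * ?v x) \<in> ?K"
      by (intro fun_algebra.mult gen) (auto simp: glued_profile_generators_def)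
    with 3 show ?thesis using has_real_derivative_sqrt_sq_plus_one by (intro bexI) auto
  next
    case 4
    have "(\<lambda>x. (\<lambda>x. -1) x * ((\<lambda>s. s) x * (?v x * (?v x * ?v x)))) \<in> ?K"
      by (intro fun_algebra.mult fun_algebra.const gen) (auto simp: glued_profile_generators_def)
    with 4 show ?thesis using has_real_derivative_inverse_sqrt_sq_plus_one by (intro bexI) auto
  next
    case 5
    obtain k' where k': "k' \<in> fun_algebra cutoff_generators" "\<And>x. (k has_real_derivative k' x) (at x)"
      using derivative_closed_cutoff_algebra 5(1) unfolding derivative_closed_on_def by blast
    have "(\<lambda>x. (\<lambda>x. 1 / A) x * (\<lambda>s. k' ((s - A) / A)) x) \<in> ?K"
      by (intro fun_algebra.mult fun_algebra.const gen) (use k' in \<open>auto simp: glued_profile_generators_def\<close>)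
    moreover have "((\<lambda>s. k ((s - A) / A)) has_real_derivative k' ((x - A) / A) * (1 / A)) (at x)" for x
      by (rule DERIV_chain2[of k]) (use k' A in \<open>auto intro!: derivative_eq_intros\<close>)
    ultimately show ?thesis unfolding 5 by (intro bexI) (auto simp: mult.commute)
  qed
qed

lemma glued_profile_in_algebra: "glued_profile A \<in> fun_algebra (glued_profile_generators A)"
proof -
  have "(\<lambda>s. ((\<lambda>s. s) s + ((\<lambda>s. 1) s - (\<lambda>s. cutoff ((s - A) / A)) s) *
       ((\<lambda>s. sqrt (s\<^sup>2 + 1)) s - (\<lambda>s. s) s)) * (\<lambda>s. 1 / s) s) \<in> fun_algebra (glued_profile_generators A)"
    by (intro fun_algebra.mult fun_algebra.add fun_algebra_diff fun_algebra.const fun_algebra.generator)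
       (auto simp: glued_profile_generators_def intro: cutoff_in_algebra)
  then show ?thesis by (simp add: glued_profile_def[abs_def] eh_flat_interp_def)
qed

section \<open>Smooth functions away from the origin\<close>

lemma frechet_derivative_cong_open:
  assumes "open S" "x \<in> S" "\<And>y. y \<in> S \<Longrightarrow> f y = g y"
  shows "frechet_derivative f (at x) = frechet_derivative g (at x)"
proof -
  have "(f has_derivative D) (at x) \<longleftrightarrow> (g has_derivative D) (at x)" for D
    using assms by (metis has_derivative_transform_within_open)
  then show ?thesis unfolding frechet_derivative_def by simp
qed

lemma has_derivative_radial:
  fixes x :: "'a::real_inner"
  assumes "(a has_real_derivative a') (at ((norm x)\<^sup>2))"
  shows "((\<lambda>y. of_real (a ((norm y)\<^sup>2)) :: complex) has_derivative
           (\<lambda>h. of_real (2 * (x \<bullet> h) * a'))) (at x)"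
proof -
  have "((\<lambda>y. y \<bullet> y) has_derivative (\<lambda>h. 2 * (x \<bullet> h))) (at x)"
    using has_derivative_inner[OF has_derivative_ident has_derivative_ident, of x]
    by (simp add: inner_commute)
  then have "((\<lambda>y. (norm y)\<^sup>2) has_derivative (\<lambda>h. 2 * (x \<bullet> h))) (at x)"
    by (simp add: power2_norm_eq_inner)
  from bounded_linear.has_derivative[OF bounded_linear_of_real DERIV_compose_FDERIV[OF assms this]]
  show ?thesis by simp
qed

lemma differentiable_radial:
  fixes x :: "'a::real_inner"
  assumes "(a has_real_derivative a') (at ((norm x)\<^sup>2))"
  shows "(\<lambda>y. of_real (a ((norm y)\<^sup>2)) :: complex) differentiable (at x)"
  using has_derivative_radial[OF assms] unfolding differentiable_def by blast

lemma smooth_on_derivative_closed_class: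
  fixes F :: "('a::real_normed_vector \<Rightarrow> 'b::real_normed_vector) set"
  assumes S: "open S"
    and diff: "\<And>g x. g \<in> F \<Longrightarrow> x \<in> S \<Longrightarrow> g differentiable (at x)"
    and der: "\<And>g v. g \<in> F \<Longrightarrow> \<exists>h\<in>F. \<forall>x\<in>S. frechet_derivative g (at x) v = h x"
    and g: "g \<in> F" and f_eq: "\<And>x. x \<in> S \<Longrightarrow> f x = g x"
  shows "smooth_on S f"
proof -
  have iter: "\<exists>h\<in>F. \<forall>x\<in>S. iter_dd f vs x = h x" for vs
  proof (induction vs)
    case Nil
    then show ?case using g f_eq by auto
  next
    case (Cons v vs)
    then obtain h where h: "h \<in> F" "\<forall>x\<in>S. iter_dd f vs x = h x" by blast
    obtain h' where h': "h' \<in> F" "\<forall>x\<in>S. frechet_derivative h (at x) v = h' x"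
      using der[OF h(1)] by blast
    have "iter_dd f (v # vs) x = h' x" if "x \<in> S" for x
      using frechet_derivative_cong_open[OF S that, of "iter_dd f vs" h] h(2) h'(2) that by simp
    with h' show ?case by blast
  qed
  show ?thesis unfolding smooth_on_def
  proof (intro conjI allI ballI S)
    fix vs x assume x: "x \<in> S"
    obtain h where h: "h \<in> F" "\<forall>x\<in>S. iter_dd f vs x = h x" using iter by blast
    obtain D where "(h has_derivative D) (at x)"
      using diff[OF h(1) x] unfolding differentiable_def by blast
    then have "(iter_dd f vs has_derivative D) (at x)"
      by (rule has_derivative_transform_within_open[OF _ S x]) (use h in auto)
    then show "iter_dd f vs differentiable (at x)" unfolding differentiable_def by blast
  qed
qed

inductive_set polynomial_functions :: "('a::real_normed_vector \<Rightarrow> complex) set" where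
  const: "(\<lambda>w. c) \<in> polynomial_functions"
| linear: "bounded_linear L \<Longrightarrow> L \<in> polynomial_functions"
| add: "P \<in> polynomial_functions \<Longrightarrow> Q \<in> polynomial_functions \<Longrightarrow>
    (\<lambda>w. P w + Q w) \<in> polynomial_functions"
| mult: "P \<in> polynomial_functions \<Longrightarrow> Q \<in> polynomial_functions \<Longrightarrow>
    (\<lambda>w. P w * Q w) \<in> polynomial_functions"

lemma polynomial_functions_has_derivative:
  "P \<in> polynomial_functions \<Longrightarrow>
     \<exists>D. (\<forall>x. (P has_derivative D x) (at x)) \<and> (\<forall>v. (\<lambda>x. D x v) \<in> polynomial_functions)"
proof (induction rule: polynomial_functions.induct)
  case (const c)
  show ?case by (auto intro!: exI[of _ "\<lambda>x h. 0"] polynomial_functions.const)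
next
  case (linear L)
  then show ?case
    by (auto intro!: exI[of _ "\<lambda>x. L"] polynomial_functions.const polynomial_functions.linear
        bounded_linear_imp_has_derivative)
next
  case (add P Q)
  then obtain D1 D2 where "\<forall>x. (P has_derivative D1 x) (at x)" "\<forall>v. (\<lambda>x. D1 x v) \<in> polynomial_functions"
    "\<forall>x. (Q has_derivative D2 x) (at x)" "\<forall>v. (\<lambda>x. D2 x v) \<in> polynomial_functions" by blast
  then show ?case
    by (intro exI[of _ "\<lambda>x h. D1 x h + D2 x h"]) (auto intro: polynomial_functions.add has_derivative_add)
next
  case (mult P Q)
  then obtain D1 D2 where "\<forall>x. (P has_derivative D1 x) (at x)" "\<forall>v. (\<lambda>x. D1 x v) \<in> polynomial_functions"
    "\<forall>x. (Q has_derivative D2 x) (at x)" "\<forall>v. (\<lambda>x. D2 x v) \<in> polynomial_functions" by blast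
  with mult.hyps show ?case
    by (intro exI[of _ "\<lambda>x h. P x * D2 x h + D1 x h * Q x"])
       (auto intro!: polynomial_functions.add polynomial_functions.mult has_derivative_mult)
qed

inductive_set poly_radial_functions :: "(real \<Rightarrow> real) set \<Rightarrow> ('a::real_inner \<Rightarrow> complex) set"
  for K where
  poly_times_radial: "P \<in> polynomial_functions \<Longrightarrow> k \<in> K \<Longrightarrow>
    (\<lambda>w. P w * of_real (k ((norm w)\<^sup>2))) \<in> poly_radial_functions K"
| add: "f \<in> poly_radial_functions K \<Longrightarrow> g \<in> poly_radial_functions K \<Longrightarrow>
    (\<lambda>w. f w + g w) \<in> poly_radial_functions K"

lemma poly_times_radial_has_derivative:
  assumes K: "derivative_closed_on {0<..} K" and P: "P \<in> polynomial_functions" and k: "k \<in> K"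
  shows "\<exists>D. (\<forall>x. x \<noteq> 0 \<longrightarrow> ((\<lambda>w. P w * of_real (k ((norm w)\<^sup>2))) has_derivative D x) (at x)) \<and>
             (\<forall>v. \<exists>g\<in>poly_radial_functions K. \<forall>x. x \<noteq> 0 \<longrightarrow> D x v = g x)"
proof -
  obtain DP where DP: "\<And>x. (P has_derivative DP x) (at x)" "\<And>v. (\<lambda>x. DP x v) \<in> polynomial_functions"
    using polynomial_functions_has_derivative[OF P] by blast
  obtain k' where k': "k' \<in> K" "\<And>s. s > 0 \<Longrightarrow> (k has_real_derivative k' s) (at s)"
    using K k unfolding derivative_closed_on_def by auto
  let ?D = "\<lambda>x h. P x * of_real (2 * (x \<bullet> h) * k' ((norm x)\<^sup>2)) + DP x h * of_real (k ((norm x)\<^sup>2))"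
  have "((\<lambda>w. P w * of_real (k ((norm w)\<^sup>2))) has_derivative ?D x) (at x)" if "x \<noteq> 0" for x
    using has_derivative_mult[OF DP(1) has_derivative_radial[OF k'(2)]] that by simp
  moreover have "\<exists>g\<in>poly_radial_functions K. \<forall>x. x \<noteq> 0 \<longrightarrow> ?D x v = g x" for v
  proof -
    have "bounded_linear (\<lambda>w. of_real (w \<bullet> v) :: complex)"
      using bounded_linear_compose[OF bounded_linear_of_real bounded_linear_inner_left[of v]]
      by (simp add: o_def)
    then have "(\<lambda>w. P w * ((\<lambda>w. 2) w * (\<lambda>w. of_real (w \<bullet> v)) w)) \<in> polynomial_functions"
      by (intro polynomial_functions.mult polynomial_functions.const polynomial_functions.linear P)
    note sum = poly_radial_functions.add[OF poly_radial_functions.poly_times_radial[OF this k'(1)]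
        poly_radial_functions.poly_times_radial[OF DP(2)[of v] k]]
    show ?thesis by (rule bexI[OF _ sum]) (simp add: mult.assoc)
  qed
  ultimately show ?thesis by (intro exI[of _ ?D]) blast
qed

lemma poly_radial_functions_has_derivative:
  assumes K: "derivative_closed_on {0<..} K" and f: "f \<in> poly_radial_functions K"
  shows "\<exists>D. (\<forall>x. x \<noteq> 0 \<longrightarrow> (f has_derivative D x) (at x)) \<and>
             (\<forall>v. \<exists>g\<in>poly_radial_functions K. \<forall>x. x \<noteq> 0 \<longrightarrow> D x v = g x)"
  using f
proof induction
  case (poly_times_radial P k)
  then show ?case by (rule poly_times_radial_has_derivative[OF K])
next
  case (add f g)
  obtain D1 where D1: "\<forall>x. x \<noteq> 0 \<longrightarrow> (f has_derivative D1 x) (at x)"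
      "\<forall>v. \<exists>g\<in>poly_radial_functions K. \<forall>x. x \<noteq> 0 \<longrightarrow> D1 x v = g x"
    using add.IH(1) by (elim exE conjE)
  obtain D2 where D2: "\<forall>x. x \<noteq> 0 \<longrightarrow> (g has_derivative D2 x) (at x)"
      "\<forall>v. \<exists>g\<in>poly_radial_functions K. \<forall>x. x \<noteq> 0 \<longrightarrow> D2 x v = g x"
    using add.IH(2) by (elim exE conjE)
  have "\<exists>h\<in>poly_radial_functions K. \<forall>x. x \<noteq> 0 \<longrightarrow> D1 x v + D2 x v = h x" for v
  proof -
    obtain g1 where g1: "g1 \<in> poly_radial_functions K" "\<forall>x. x \<noteq> 0 \<longrightarrow> D1 x v = g1 x"
      using D1(2) by fast
    obtain g2 where g2: "g2 \<in> poly_radial_functions K" "\<forall>x. x \<noteq> 0 \<longrightarrow> D2 x v = g2 x"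
      using D2(2) by fast
    show ?thesis using g1(2) g2(2) by (intro bexI[OF _ poly_radial_functions.add[OF g1(1) g2(1)]]) simp
  qed
  moreover have "\<forall>x. x \<noteq> 0 \<longrightarrow> ((\<lambda>w. f w + g w) has_derivative (\<lambda>h. D1 x h + D2 x h)) (at x)"
    using D1(1) D2(1) by (simp add: has_derivative_add)
  ultimately show ?case by (intro exI[of _ "\<lambda>x h. D1 x h + D2 x h"]) blast
qed

lemma smooth_on_poly_radial_functions:
  fixes h :: "'a::real_inner \<Rightarrow> complex"
  assumes K: "derivative_closed_on {0<..} K" and f: "f \<in> poly_radial_functions K"
    and eq: "\<And>x. x \<noteq> 0 \<Longrightarrow> h x = f x"
  shows "smooth_on (- {0}) h"
proof (rule smooth_on_derivative_closed_class[OF _ _ _ f])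
  fix g :: "'a \<Rightarrow> complex" and x assume "g \<in> poly_radial_functions K" "x \<in> - {0::'a}"
  then obtain D where "(g has_derivative D x) (at x)"
    using poly_radial_functions_has_derivative[OF K] by fastforce
  then show "g differentiable (at x)" unfolding differentiable_def by blast
next
  fix g :: "'a \<Rightarrow> complex" and v assume g: "g \<in> poly_radial_functions K"
  obtain D where D: "\<forall>x. x \<noteq> 0 \<longrightarrow> (g has_derivative D x) (at x)"
     "\<forall>v. \<exists>g\<in>poly_radial_functions K. \<forall>x. x \<noteq> 0 \<longrightarrow> D x v = g x"
    using poly_radial_functions_has_derivative[OF K g] by (elim exE conjE)
  then obtain g' where g': "g' \<in> poly_radial_functions K" "\<forall>x. x \<noteq> 0 \<longrightarrow> D x v = g' x"
    by fast
  have "frechet_derivative g (at x) v = g' x" if "x \<noteq> 0" for x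
    using frechet_derivative_at[OF D(1)[rule_format, OF that], symmetric] g'(2) that by simp
  with g'(1) show "\<exists>g'\<in>poly_radial_functions K. \<forall>x\<in>- {0}. frechet_derivative g (at x) v = g' x"
    by blast
qed (use eq in auto)

lemma wirt_cong_open:
  assumes "open S" "x \<in> S" "\<And>y. y \<in> S \<Longrightarrow> f y = g y"
  shows "wirt j f x = wirt j g x" "wirtbar j f x = wirtbar j g x"
  unfolding wirt_def wirtbar_def using frechet_derivative_cong_open[OF assms] by simp_all

lemma wirt_has_derivative:
  assumes "(f has_derivative D) (at x)"
  shows "wirt j f x = (D (axis j 1) - \<i> * D (axis j \<i>)) / 2"
    and "wirtbar j f x = (D (axis j 1) + \<i> * D (axis j \<i>)) / 2"
  unfolding wirt_def wirtbar_def using frechet_derivative_at[OF assms] by simp_all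

lemma wirt_add:
  assumes "f differentiable (at x)" "g differentiable (at x)"
  shows "wirt j (\<lambda>y. f y + g y) x = wirt j f x + wirt j g x"
    and "wirtbar j (\<lambda>y. f y + g y) x = wirtbar j f x + wirtbar j g x"
proof -
  obtain Df Dg where d: "(f has_derivative Df) (at x)" "(g has_derivative Dg) (at x)"
    using assms unfolding differentiable_def by blast
  note sum = wirt_has_derivative[OF has_derivative_add[OF d]]
  show "wirt j (\<lambda>y. f y + g y) x = wirt j f x + wirt j g x"
       "wirtbar j (\<lambda>y. f y + g y) x = wirtbar j f x + wirtbar j g x"
    unfolding sum wirt_has_derivative[OF d(1)] wirt_has_derivative[OF d(2)]
    by (simp_all add: algebra_simps add_divide_distrib diff_divide_distrib)
qed

lemma wirt_mult:
  assumes "f differentiable (at x)" "g differentiable (at x)"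
  shows "wirt j (\<lambda>y. f y * g y) x = wirt j f x * g x + f x * wirt j g x"
    and "wirtbar j (\<lambda>y. f y * g y) x = wirtbar j f x * g x + f x * wirtbar j g x"
proof -
  obtain Df Dg where d: "(f has_derivative Df) (at x)" "(g has_derivative Dg) (at x)"
    using assms unfolding differentiable_def by blast
  note prod = wirt_has_derivative[OF has_derivative_mult[OF d]]
  show "wirt j (\<lambda>y. f y * g y) x = wirt j f x * g x + f x * wirt j g x"
       "wirtbar j (\<lambda>y. f y * g y) x = wirtbar j f x * g x + f x * wirtbar j g x"
    unfolding prod wirt_has_derivative[OF d(1)] wirt_has_derivative[OF d(2)]
    by (simp_all add: algebra_simps add_divide_distrib diff_divide_distrib)
qed

lemma wirt_const: "wirt j (\<lambda>y. c) x = 0" "wirtbar j (\<lambda>y. c) x = 0"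
  using wirt_has_derivative[OF has_derivative_const] by simp_all

lemma has_derivative_coordinate:
  fixes x :: "complex^'n"
  shows "((\<lambda>y. y $ k) has_derivative (\<lambda>h. h $ k)) (at x)"
    and "((\<lambda>y. cnj (y $ k)) has_derivative (\<lambda>h. cnj (h $ k))) (at x)"
  using bounded_linear_vec_nth[of k]
    bounded_linear_compose[OF bounded_linear_cnj bounded_linear_vec_nth[of k]]
  by (auto intro: bounded_linear_imp_has_derivative simp: o_def)

lemma wirt_coordinate:
  "wirt j (\<lambda>y. y $ k) x = (if k = j then 1 else 0)" "wirtbar j (\<lambda>y. y $ k) x = 0"
  "wirt j (\<lambda>y. cnj (y $ k)) x = 0" "wirtbar j (\<lambda>y. cnj (y $ k)) x = (if k = j then 1 else 0)"
  unfolding wirt_has_derivative[OF has_derivative_coordinate(1)]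
    wirt_has_derivative[OF has_derivative_coordinate(2)]
  by (simp_all add: axis_def)

lemma wirt_radial:
  assumes "(a has_real_derivative a') (at ((norm x)\<^sup>2))"
  shows "wirt j (\<lambda>y. of_real (a ((norm y)\<^sup>2))) x = of_real a' * cnj (x $ j)"
    and "wirtbar j (\<lambda>y. of_real (a ((norm y)\<^sup>2))) x = of_real a' * x $ j"
  using wirt_has_derivative[OF has_derivative_radial[OF assms]]
  by (simp_all add: inner_axis complex_eq_iff)

section \<open>Radial (1,1)-forms\<close>

definition radial_form :: "(real \<Rightarrow> real) \<Rightarrow> complex^2 \<Rightarrow> complex^2^2" where
  "radial_form a w = (\<chi> j k. of_real (a ((norm w)\<^sup>2)) * (if j = k then 1 else 0)
                        + cnj (w $ j) * w $ k * of_real (deriv a ((norm w)\<^sup>2)))"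

lemma radial_form_nth:
  "radial_form a w $ j $ k = of_real (a ((norm w)\<^sup>2)) * (if j = k then 1 else 0)
                              + cnj (w $ j) * w $ k * of_real (deriv a ((norm w)\<^sup>2))"
  by (simp add: radial_form_def)

lemma wirt_radial_entry:
  fixes x :: "complex^2" and c :: complex and j k :: 2
  assumes a: "(a has_real_derivative a') (at ((norm x)\<^sup>2))"
      and b: "(b has_real_derivative b') (at ((norm x)\<^sup>2))"
  defines "e \<equiv> \<lambda>y. of_real (a ((norm y)\<^sup>2)) * c + cnj (y $ j) * y $ k * of_real (b ((norm y)\<^sup>2))"
  shows "wirt l e x = of_real a' * cnj (x $ l) * c
           + cnj (x $ j) * (if k = l then 1 else 0) * of_real (b ((norm x)\<^sup>2))
           + cnj (x $ j) * x $ k * (of_real b' * cnj (x $ l))"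
    and "wirtbar l e x = of_real a' * x $ l * c
           + (if j = l then 1 else 0) * x $ k * of_real (b ((norm x)\<^sup>2))
           + cnj (x $ j) * x $ k * (of_real b' * x $ l)"
proof -
  have d: "(\<lambda>y. cnj (y $ j)) differentiable (at x)" "(\<lambda>y. y $ k) differentiable (at x)"
    using has_derivative_coordinate unfolding differentiable_def by blast+
  note da = differentiable_radial[OF a] and db = differentiable_radial[OF b]
  have "(\<lambda>y. cnj (y $ j) * y $ k) differentiable (at x)" using d by simp
  note rules = wirt_add[OF differentiable_mult[OF da differentiable_const]
        differentiable_mult[OF this db]]
      wirt_mult[OF da differentiable_const] wirt_mult[OF this db] wirt_mult[OF d]
      wirt_radial[OF a] wirt_radial[OF b] wirt_const wirt_coordinate
  show "wirt l e x = of_real a' * cnj (x $ l) * c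
           + cnj (x $ j) * (if k = l then 1 else 0) * of_real (b ((norm x)\<^sup>2))
           + cnj (x $ j) * x $ k * (of_real b' * cnj (x $ l))"
       "wirtbar l e x = of_real a' * x $ l * c
           + (if j = l then 1 else 0) * x $ k * of_real (b ((norm x)\<^sup>2))
           + cnj (x $ j) * x $ k * (of_real b' * x $ l)"
    unfolding e_def rules by simp_all
qed

lemma quarter_ddc_radial:
  assumes \<Phi>: "\<And>\<rho>. \<rho> > 0 \<Longrightarrow> (\<Phi> has_real_derivative a \<rho>) (at \<rho>)"
    and a: "a differentiable (at ((norm w)\<^sup>2))" and w: "w \<noteq> 0"
  shows "quarter_ddc (\<lambda>y. \<Phi> ((norm y)\<^sup>2)) w = radial_form a w"
proof -
  have a': "(a has_real_derivative deriv a ((norm w)\<^sup>2)) (at ((norm w)\<^sup>2))"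
    using a by (simp add: DERIV_deriv_iff_real_differentiable)
  have "wirtbar k (\<lambda>y. of_real (\<Phi> ((norm y)\<^sup>2))) y = of_real (a ((norm y)\<^sup>2)) * y $ k"
    if "y \<in> - {0}" for y k
    using that by (intro wirt_radial(2) \<Phi>) simp
  then have "wirt j (wirtbar k (\<lambda>y. of_real (\<Phi> ((norm y)\<^sup>2)))) w
      = wirt j (\<lambda>y. of_real (a ((norm y)\<^sup>2)) * y $ k) w" for j k
    using w by (intro wirt_cong_open(1)[where S="- {0}"]) auto
  also have "\<dots> j k = radial_form a w $ j $ k" for j k
  proof -
    have "(\<lambda>y. y $ k) differentiable (at w)"
      using has_derivative_coordinate(1) unfolding differentiable_def by blast
    then show ?thesis
      by (simp add: wirt_mult(1)[OF differentiable_radial[OF a']] wirt_radial(1)[OF a']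
          wirt_coordinate radial_form_nth)
  qed
  finally show ?thesis by (simp add: quarter_ddc_def vec_eq_iff)
qed

lemma radial_form_cong:
  assumes "eventually (\<lambda>\<rho>. a \<rho> = b \<rho>) (nhds ((norm w)\<^sup>2))"
  shows "radial_form a w = radial_form b w"
  using eventually_nhds_x_imp_x[OF assms] deriv_cong_ev[OF assms refl]
  by (simp add: radial_form_def)

lemma norm_vec2_sq: "(norm (w::complex^2))\<^sup>2 = (cmod (w$1))\<^sup>2 + (cmod (w$2))\<^sup>2"
  by (simp add: norm_vec_def L2_set_def sum_2)

lemma cnj_mult_self: "cnj z * z = of_real ((cmod z)\<^sup>2)"
  using complex_norm_square[of z] by (simp add: mult.commute)

lemma det_radial_form:
  "det (radial_form a w)
     = of_real (a ((norm w)\<^sup>2) * (a ((norm w)\<^sup>2) + (norm w)\<^sup>2 * deriv a ((norm w)\<^sup>2)))"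
proof -
  let ?a = "of_real (a ((norm w)\<^sup>2)) :: complex"
  let ?b = "of_real (deriv a ((norm w)\<^sup>2)) :: complex"
  have "det (radial_form a w) = ?a * ?a + ?a * ?b * (cnj (w$1) * w$1 + cnj (w$2) * w$2)"
    unfolding det_2 radial_form_nth by (simp add: algebra_simps)
  also have "cnj (w$1) * w$1 + cnj (w$2) * w$2 = of_real ((norm w)\<^sup>2)"
    unfolding cnj_mult_self norm_vec2_sq by simp
  finally show ?thesis by (simp add: algebra_simps)
qed

lemma radial_form_hermitian: "real_form11_on S (radial_form a)"
  unfolding real_form11_on_def radial_form_nth by auto

lemma radial_form_pm_invariant: "pm_invariant (radial_form a)"
  unfolding pm_invariant_def by (simp add: vec_eq_iff radial_form_nth)

lemma radial_form_eq_flat: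
  assumes "a ((norm w)\<^sup>2) = 1" "deriv a ((norm w)\<^sup>2) = 0"
  shows "radial_form a w = flat_form w"
  using assms by (simp add: flat_form_def vec_eq_iff radial_form_nth mat_def)

lemma cmod_cnj_sum_le:
  "(cmod (cnj a * x + cnj b * y))\<^sup>2 \<le> ((cmod a)\<^sup>2 + (cmod b)\<^sup>2) * ((cmod x)\<^sup>2 + (cmod y)\<^sup>2)"
proof -
  have "cmod (cnj a * x + cnj b * y) \<le> cmod a * cmod x + cmod b * cmod y"
    using norm_triangle_ineq[of "cnj a * x" "cnj b * y"] by (simp add: norm_mult)
  then have "(cmod (cnj a * x + cnj b * y))\<^sup>2 \<le> (cmod a * cmod x + cmod b * cmod y)\<^sup>2"
    by (intro power_mono) auto
  also have "\<dots> \<le> ((cmod a)\<^sup>2 + (cmod b)\<^sup>2) * ((cmod x)\<^sup>2 + (cmod y)\<^sup>2)"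
    using zero_le_power2[of "cmod a * cmod y - cmod b * cmod x"]
    by (simp add: algebra_simps power2_eq_square)
  finally show ?thesis .
qed

lemma radial_form_quadratic:
  "(\<Sum>j\<in>UNIV. \<Sum>k\<in>UNIV. radial_form a w $ j $ k * v $ j * cnj (v $ k))
   = of_real (a ((norm w)\<^sup>2) * ((cmod (v$1))\<^sup>2 + (cmod (v$2))\<^sup>2)
       + deriv a ((norm w)\<^sup>2) * (cmod (cnj (w$1) * v$1 + cnj (w$2) * v$2))\<^sup>2)"
proof -
  let ?a = "of_real (a ((norm w)\<^sup>2)) :: complex"
  let ?b = "of_real (deriv a ((norm w)\<^sup>2)) :: complex"
  let ?z = "cnj (w$1) * v$1 + cnj (w$2) * v$2"
  have "(\<Sum>j\<in>UNIV. \<Sum>k\<in>UNIV. radial_form a w $ j $ k * v $ j * cnj (v $ k))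
     = ?a * (v$1 * cnj (v$1) + v$2 * cnj (v$2)) + ?b * (?z * cnj ?z)"
    unfolding sum_2 radial_form_nth by (simp add: algebra_simps)
  also have "\<dots> = ?a * of_real ((cmod (v$1))\<^sup>2 + (cmod (v$2))\<^sup>2) + ?b * of_real ((cmod ?z)\<^sup>2)"
    unfolding complex_norm_square of_real_add by simp
  finally show ?thesis by simp
qed

lemma radial_form_positive:
  assumes "\<And>\<rho>. \<rho> > 0 \<Longrightarrow> 0 < a \<rho> \<and> 0 < a \<rho> + \<rho> * deriv a \<rho>"
  shows "positive_form11_on (- {0}) (radial_form a)"
  unfolding positive_form11_on_def
proof (intro ballI allI impI)
  fix w :: "complex^2" and v :: "complex^2" assume w: "w \<in> - {0}" and v: "v \<noteq> 0"
  let ?\<rho> = "(norm w)\<^sup>2" and ?V = "(cmod (v$1))\<^sup>2 + (cmod (v$2))\<^sup>2"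
  let ?Z = "(cmod (cnj (w$1) * v$1 + cnj (w$2) * v$2))\<^sup>2"
  have a: "0 < a ?\<rho>" "0 < a ?\<rho> + ?\<rho> * deriv a ?\<rho>" using assms[of ?\<rho>] w by auto
  have "v$1 \<noteq> 0 \<or> v$2 \<noteq> 0" using v by (auto simp: vec_eq_iff forall_2)
  then have V: "?V > 0" by (auto simp: add_pos_nonneg add_nonneg_pos)
  have Z: "?Z \<le> ?\<rho> * ?V"
    using cmod_cnj_sum_le[of "w$1" "v$1" "w$2" "v$2"] by (simp add: norm_vec2_sq)
  have "a ?\<rho> * ?V + deriv a ?\<rho> * ?Z > 0"
  proof (cases "deriv a ?\<rho> \<ge> 0")
    case True
    then show ?thesis using a V by (simp add: add_pos_nonneg)
  next
    case False
    then have "deriv a ?\<rho> * ?Z \<ge> deriv a ?\<rho> * (?\<rho> * ?V)" using Z by (intro mult_left_mono_neg) auto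
    moreover have "(a ?\<rho> + ?\<rho> * deriv a ?\<rho>) * ?V > 0" using a V by simp
    ultimately show ?thesis by (simp add: algebra_simps)
  qed
  then show "0 < Re (\<Sum>j\<in>UNIV. \<Sum>k\<in>UNIV. radial_form a w $ j $ k * v $ j * cnj (v $ k))"
    unfolding radial_form_quadratic by simp
qed

lemma radial_form_closed:
  assumes K: "derivative_closed_on {0<..} K" and a: "a \<in> K"
  shows "closed_form11_on (- {0}) (radial_form a)"
proof -
  obtain a' where a': "a' \<in> K" "\<And>\<rho>. \<rho> > 0 \<Longrightarrow> (a has_real_derivative a' \<rho>) (at \<rho>)"
    using K a unfolding derivative_closed_on_def by auto
  obtain a'' where a'': "\<And>\<rho>. \<rho> > 0 \<Longrightarrow> (a' has_real_derivative a'' \<rho>) (at \<rho>)"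
    using K a'(1) unfolding derivative_closed_on_def by (meson greaterThan_iff)
  define e where "e j k y = of_real (a ((norm y)\<^sup>2)) * (if j = k then 1 else 0)
      + cnj (y $ j) * y $ k * of_real (a' ((norm y)\<^sup>2))" for j k and y :: "complex^2"
  have entry: "radial_form a y $ j $ k = e j k y" if "y \<in> - {0}" for y j k
    using that DERIV_imp_deriv[OF a'(2)] by (simp add: radial_form_nth e_def)
  have "e j k \<in> poly_radial_functions K" for j k
  proof -
    have "bounded_linear (\<lambda>w::complex^2. cnj (w $ j))"
      using bounded_linear_compose[OF bounded_linear_cnj bounded_linear_vec_nth[of j]]
      by (simp add: o_def)
    then have "(\<lambda>w. cnj (w $ j) * w $ k) \<in> polynomial_functions"
      by (intro polynomial_functions.mult polynomial_functions.linear bounded_linear_vec_nth)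
    then have "(\<lambda>y. (\<lambda>y. if j = k then 1 else 0) y * of_real (a ((norm y)\<^sup>2))
        + (\<lambda>y. cnj (y $ j) * y $ k) y * of_real (a' ((norm y)\<^sup>2))) \<in> poly_radial_functions K"
      using a a'(1)
      by (intro poly_radial_functions.add poly_radial_functions.poly_times_radial polynomial_functions.const)
    then show ?thesis by (simp add: e_def[abs_def] mult.commute)
  qed
  then have smooth: "smooth_on (- {0}) (\<lambda>y. radial_form a y $ j $ k)" for j k
    using entry by (intro smooth_on_poly_radial_functions[OF K]) auto
  have "wirt l (\<lambda>y. radial_form a y $ j $ k) x = wirt j (\<lambda>y. radial_form a y $ l $ k) x \<and>
        wirtbar l (\<lambda>y. radial_form a y $ j $ k) x = wirtbar k (\<lambda>y. radial_form a y $ j $ l) x"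
    if x: "x \<in> - {0}" for x :: "complex^2" and j k l
  proof -
    have "(norm x)\<^sup>2 > 0" using x by simp
    note rules = wirt_radial_entry[OF a'(2)[OF this] a''[OF this]]
    have "wirt l (\<lambda>y. radial_form a y $ j $ k) x = wirt l (e j k) x"
         "wirtbar l (\<lambda>y. radial_form a y $ j $ k) x = wirtbar l (e j k) x" for j k l
      using x entry by (auto intro!: wirt_cong_open[where S="- {0}"])
    then show ?thesis unfolding e_def[abs_def] rules by (simp add: algebra_simps)
  qed
  with smooth show ?thesis unfolding closed_form11_on_def by blast
qed

definition eh_radial_potential :: "real \<Rightarrow> real \<Rightarrow> real" where
  "eh_radial_potential t \<rho> = sqrt (\<rho>\<^sup>2 + t ^ 4) + t\<^sup>2 * ln (\<rho> / (sqrt (\<rho>\<^sup>2 + t ^ 4) + t\<^sup>2))"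

lemma EH_potential_eq_radial: "EH_potential t y = eh_radial_potential t ((norm y)\<^sup>2)"
  unfolding EH_potential_def eh_radial_potential_def by (simp add: power_mult[symmetric])

lemma has_real_derivative_eh_radial_potential:
  assumes t: "t > 0" and \<rho>: "\<rho> > 0"
  shows "(eh_radial_potential t has_real_derivative sqrt (\<rho>\<^sup>2 + t ^ 4) / \<rho>) (at \<rho>)"
proof -
  define u where "u = sqrt (\<rho>\<^sup>2 + t ^ 4)"
  have "0 < \<rho>\<^sup>2 + t ^ 4" using t by (simp add: add_nonneg_pos)
  then have u: "u > 0" "u\<^sup>2 = \<rho>\<^sup>2 + t ^ 4" unfolding u_def by simp_all
  have pos: "0 < sqrt (x\<^sup>2 + t ^ 4) + t\<^sup>2" for x
    using t by (simp add: add_nonneg_pos)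
  have "((\<lambda>x. sqrt (x\<^sup>2 + t ^ 4) + t\<^sup>2 * (ln x - ln (sqrt (x\<^sup>2 + t ^ 4) + t\<^sup>2))) has_real_derivative
      \<rho> / u + t\<^sup>2 * (1 / \<rho> - \<rho> / u / (u + t\<^sup>2))) (at \<rho>)"
    using \<rho> u pos[of \<rho>] unfolding u_def
    by (auto intro!: derivative_eq_intros simp: field_simps power2_eq_square)
  moreover have "\<rho> / u + t\<^sup>2 * (1 / \<rho> - \<rho> / u / (u + t\<^sup>2)) = u / \<rho>"
  proof -
    have ut: "u + t\<^sup>2 > 0" using u(1) by (simp add: add_pos_nonneg)
    have "\<rho> / u - \<rho> / u / (u + t\<^sup>2) * t\<^sup>2 = \<rho> / u * (1 - t\<^sup>2 / (u + t\<^sup>2))"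
      by (simp add: algebra_simps)
    also have "1 - t\<^sup>2 / (u + t\<^sup>2) = u / (u + t\<^sup>2)" using ut by (simp add: field_simps)
    finally have "\<rho> / u - \<rho> / u / (u + t\<^sup>2) * t\<^sup>2 = \<rho> / (u + t\<^sup>2)" using u(1) by simp
    moreover have "t\<^sup>2 * (1 / \<rho> - \<rho> / u / (u + t\<^sup>2)) = t\<^sup>2 / \<rho> - \<rho> / u / (u + t\<^sup>2) * t\<^sup>2"
      by (simp add: right_diff_distrib mult.commute)
    moreover have "\<rho> / (u + t\<^sup>2) + t\<^sup>2 / \<rho> = (\<rho>\<^sup>2 + t\<^sup>2 * (u + t\<^sup>2)) / (\<rho> * (u + t\<^sup>2))"
      using ut \<rho> by (simp add: field_simps power2_eq_square)
    moreover have "\<rho>\<^sup>2 + t\<^sup>2 * (u + t\<^sup>2) = u * (u + t\<^sup>2)"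
      using u(2) by (simp add: algebra_simps power2_eq_square power4_eq_xxxx)
    ultimately show ?thesis using ut by simp
  qed
  ultimately have "((\<lambda>x. sqrt (x\<^sup>2 + t ^ 4) + t\<^sup>2 * (ln x - ln (sqrt (x\<^sup>2 + t ^ 4) + t\<^sup>2))) has_real_derivative
      sqrt (\<rho>\<^sup>2 + t ^ 4) / \<rho>) (at \<rho>)"
    by (simp add: u_def)
  then show ?thesis
    by (rule has_field_derivative_transform_within_open[where S="{0<..}"])
       (use \<rho> pos in \<open>auto simp: eh_radial_potential_def ln_divide_pos\<close>)
qed

lemma EH_form_eq_radial_form:
  assumes t: "t > 0" and w: "w \<noteq> 0"
  shows "EH_form t w = radial_form (\<lambda>\<rho>. sqrt (\<rho>\<^sup>2 + t ^ 4) / \<rho>) w"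
proof -
  have "EH_form t = quarter_ddc (\<lambda>y. eh_radial_potential t ((norm y)\<^sup>2))"
    by (simp add: EH_form_def EH_potential_eq_radial[abs_def])
  moreover have "(\<lambda>\<rho>. sqrt (\<rho>\<^sup>2 + t ^ 4) / \<rho>) differentiable (at ((norm w)\<^sup>2))"
  proof -
    have "0 < ((norm w)\<^sup>2)\<^sup>2 + t ^ 4" using t by (simp add: add_nonneg_pos)
    then show ?thesis
      using w unfolding real_differentiable_def by (auto intro!: derivative_eq_intros)
  qed
  ultimately show ?thesis
    using w by (simp add: quarter_ddc_radial has_real_derivative_eh_radial_potential[OF t])
qed

section \<open>The glued form\<close>

definition glued_form :: "real \<Rightarrow> real \<Rightarrow> complex^2 \<Rightarrow> complex^2^2" where
  "glued_form A t = radial_form (\<lambda>\<rho>. glued_profile A (\<rho> / t\<^sup>2))"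

lemma glued_form_hermitian: "real_form11_on S (glued_form A t)"
  by (simp add: glued_form_def radial_form_hermitian)

lemma glued_form_pm_invariant: "pm_invariant (glued_form A t)"
  by (simp add: glued_form_def radial_form_pm_invariant)

lemma glued_form_closed:
  assumes "A > 0" "t > 0"
  shows "closed_form11_on (- {0}) (glued_form A t)"
  unfolding glued_form_def
proof (rule radial_form_closed)
  show "derivative_closed_on {0<..} ((\<lambda>k \<rho>. k (\<rho> / t\<^sup>2)) ` fun_algebra (glued_profile_generators A))"
    using assms by (intro derivative_closed_on_rescale derivative_closed_glued_profile_algebra) simp_all
  show "(\<lambda>\<rho>. glued_profile A (\<rho> / t\<^sup>2)) \<in> (\<lambda>k \<rho>. k (\<rho> / t\<^sup>2)) ` fun_algebra (glued_profile_generators A)"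
    using glued_profile_in_algebra by blast
qed

lemma glued_profile_rescaled_add_deriv:
  assumes "A > 0" "t > 0" "\<rho> > 0"
  shows "glued_profile A (\<rho> / t\<^sup>2) + \<rho> * deriv (\<lambda>\<rho>. glued_profile A (\<rho> / t\<^sup>2)) \<rho>
           = deriv (eh_flat_interp A) (\<rho> / t\<^sup>2)"
proof -
  have s: "\<rho> / t\<^sup>2 > 0" using assms by simp
  have "(glued_profile A has_real_derivative deriv (glued_profile A) (\<rho> / t\<^sup>2)) (at (\<rho> / t\<^sup>2))"
    using has_real_derivative_glued_profile[OF assms(1) s] by (simp add: DERIV_imp_deriv)
  then have "((\<lambda>\<rho>. glued_profile A (\<rho> / t\<^sup>2)) has_real_derivative
          deriv (glued_profile A) (\<rho> / t\<^sup>2) * (1 / t\<^sup>2)) (at \<rho>)"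
    by (rule DERIV_chain2) (use assms(2) in \<open>auto intro!: derivative_eq_intros simp: field_simps eval_nat_numeral\<close>)
  then have "deriv (\<lambda>\<rho>. glued_profile A (\<rho> / t\<^sup>2)) \<rho> = deriv (glued_profile A) (\<rho> / t\<^sup>2) / t\<^sup>2"
    by (simp add: DERIV_imp_deriv)
  then show ?thesis using glued_profile_add_deriv[OF assms(1) s] by (simp add: field_simps)
qed

lemma glued_form_positive:
  assumes bound: "\<forall>x. \<bar>deriv cutoff x\<bar> \<le> A - 2" and t: "t > 0"
  shows "positive_form11_on (- {0}) (glued_form A t)"
  unfolding glued_form_def
proof (rule radial_form_positive)
  fix \<rho> :: real assume "\<rho> > 0"
  moreover have A: "A > 0" using bound[rule_format, of 0] by linarith
  ultimately show "0 < glued_profile A (\<rho> / t\<^sup>2) \<and>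
      0 < glued_profile A (\<rho> / t\<^sup>2) + \<rho> * deriv (\<lambda>\<rho>. glued_profile A (\<rho> / t\<^sup>2)) \<rho>"
    using t glued_profile_ge_1[of "\<rho> / t\<^sup>2" A] deriv_eh_flat_interp_pos[OF bound, of "\<rho> / t\<^sup>2"]
    by (simp add: glued_profile_rescaled_add_deriv)
qed

lemma wedge_sq_ratio_glued_form:
  assumes "A > 0" "t > 0" "w \<noteq> 0"
  shows "wedge_sq_ratio (glued_form A t) w = 2 * volume_ratio A ((norm w)\<^sup>2 / t\<^sup>2)"
  using assms
  by (simp add: wedge_sq_ratio_def glued_form_def det_radial_form glued_profile_rescaled_add_deriv
      volume_ratio_def)

lemma glued_form_eq_EH_form:
  assumes A: "A > 0" and t: "t > 0" and w: "w \<noteq> 0" "(norm w)\<^sup>2 < A * t\<^sup>2"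
  shows "glued_form A t w = EH_form t w"
proof -
  have "glued_profile A (\<rho> / t\<^sup>2) = sqrt (\<rho>\<^sup>2 + t ^ 4) / \<rho>" if "\<rho> \<in> {0<..<A * t\<^sup>2}" for \<rho>
  proof -
    have "sqrt (t ^ 4) = t\<^sup>2"
      using real_sqrt_abs[of "t\<^sup>2"] by (simp add: power_mult[symmetric])
    have "\<rho> / t\<^sup>2 \<le> A" using that t by (simp add: field_simps)
    then have "glued_profile A (\<rho> / t\<^sup>2) = sqrt ((\<rho> / t\<^sup>2)\<^sup>2 + 1) / (\<rho> / t\<^sup>2)"
      using A by (simp add: glued_profile_def eh_flat_interp_small)
    also have "(\<rho> / t\<^sup>2)\<^sup>2 + 1 = (\<rho>\<^sup>2 + t ^ 4) / t ^ 4"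
      using t by (simp add: power_divide field_simps power_mult[symmetric])
    also have "sqrt \<dots> = sqrt (\<rho>\<^sup>2 + t ^ 4) / t\<^sup>2"
      using \<open>sqrt (t ^ 4) = t\<^sup>2\<close> by (simp add: real_sqrt_divide)
    finally show ?thesis using t that by simp
  qed
  then have "eventually (\<lambda>\<rho>. glued_profile A (\<rho> / t\<^sup>2) = sqrt (\<rho>\<^sup>2 + t ^ 4) / \<rho>) (nhds ((norm w)\<^sup>2))"
    using w by (intro eventually_nhds_in_open[of "{0<..<A * t\<^sup>2}", THEN eventually_mono]) auto
  then show ?thesis
    using w by (simp add: glued_form_def radial_form_cong EH_form_eq_radial_form[OF t])
qed

lemma glued_form_eq_flat:
  assumes A: "A > 0" and t: "t > 0" and w: "(norm w)\<^sup>2 > 2 * A * t\<^sup>2"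
  shows "glued_form A t w = flat_form w"
proof -
  have "glued_profile A (\<rho> / t\<^sup>2) = 1" if "\<rho> \<in> {2 * A * t\<^sup>2<..}" for \<rho>
  proof -
    have "0 < 2 * A * t\<^sup>2" using A t by simp
    with that t have "\<rho> > 0" "\<rho> / t\<^sup>2 \<ge> 2 * A" by (simp_all add: field_simps)
    then show ?thesis using A t by (simp add: glued_profile_def eh_flat_interp_large)
  qed
  then have "eventually (\<lambda>\<rho>. glued_profile A (\<rho> / t\<^sup>2) = 1) (nhds ((norm w)\<^sup>2))"
    using w by (intro eventually_nhds_in_open[of "{2 * A * t\<^sup>2<..}", THEN eventually_mono]) auto
  then have "glued_form A t w = radial_form (\<lambda>_. 1) w"
    unfolding glued_form_def by (rule radial_form_cong)
  also have "\<dots> = flat_form w" by (rule radial_form_eq_flat) simp_all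
  finally show ?thesis .
qed

lemma glued_form_eq_EH_form_ball:
  assumes A: "A > 0" and t: "t > 0" and R: "R\<^sup>2 < 4 * A" and w: "w \<noteq> 0" "norm w \<le> t * R / 2"
  shows "glued_form A t w = EH_form t w"
proof (rule glued_form_eq_EH_form[OF A t w(1)])
  have "(norm w)\<^sup>2 \<le> (t * R / 2)\<^sup>2" using w(2) by (intro power_mono) auto
  also have "\<dots> = t\<^sup>2 * R\<^sup>2 / 4" by (simp add: power_mult_distrib power_divide)
  also have "\<dots> < A * t\<^sup>2" using R t by (simp add: field_simps)
  finally show "(norm w)\<^sup>2 < A * t\<^sup>2" .
qed

lemma glued_form_flat_outside_ball:
  assumes A: "A > 0" and t: "t > 0" and R: "R \<ge> 0" "2 * A < R\<^sup>2"
  shows "\<exists>U. open U \<and> {w. t * R \<le> norm w} \<subseteq> U \<and> (\<forall>w\<in>U. w \<noteq> 0 \<longrightarrow> glued_form A t w = flat_form w)"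
proof (intro exI[of _ "{w. 2 * A * t\<^sup>2 < (norm w)\<^sup>2}"] conjI ballI impI)
  show "open {w::complex^2. 2 * A * t\<^sup>2 < (norm w)\<^sup>2}"
    by (intro open_Collect_less continuous_intros)
  have "2 * A * t\<^sup>2 < (norm w)\<^sup>2" if "t * R \<le> norm w" for w :: "complex^2"
  proof -
    have "2 * A * t\<^sup>2 < R\<^sup>2 * t\<^sup>2" using R t by simp
    also have "\<dots> = (t * R)\<^sup>2" by (simp add: power_mult_distrib)
    also have "\<dots> \<le> (norm w)\<^sup>2" using that t R by (intro power_mono) auto
    finally show ?thesis .
  qed
  then show "{w. t * R \<le> norm w} \<subseteq> {w::complex^2. 2 * A * t\<^sup>2 < (norm w)\<^sup>2}" by blast
qed (use glued_form_eq_flat[OF A t] in auto)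

lemma wedge_sq_ratio_glued_form_sphere:
  assumes A: "A > 0" and t: "t > 0" and s: "s > 0" and w: "norm w = t * sqrt s"
  shows "wedge_sq_ratio (glued_form A t) w = 2 * volume_ratio A s"
proof -
  from w t s have "w \<noteq> 0" "(norm w)\<^sup>2 / t\<^sup>2 = s" by (auto simp: power_mult_distrib)
  then show ?thesis by (simp add: wedge_sq_ratio_glued_form[OF A t])
qed

theorem proposition6p3:
  shows "\<exists>R::real. R > 0 \<and> (\<exists>\<upsilon>::real. 0 < \<upsilon> \<and> \<upsilon> < 1 \<and>
    (\<forall>t::real. t > 0 \<longrightarrow>
      (\<exists>H :: complex^2 \<Rightarrow> complex^2^2.
         closed_form11_on (- {0}) H \<and> real_form11_on (- {0}) H \<and>
         positive_form11_on (- {0}) H \<and> pm_invariant H \<and>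
         (\<forall>w. w \<noteq> 0 \<and> norm w \<le> t * R / 2 \<longrightarrow> H w = EH_form t w) \<and>
         (\<exists>U. open U \<and> {w. norm w \<ge> t * R} \<subseteq> U \<and>
              (\<forall>w\<in>U. w \<noteq> 0 \<longrightarrow> H w = flat_form w)) \<and>
         (\<forall>w. w \<noteq> 0 \<longrightarrow> wedge_sq_ratio H w \<ge> 2 * \<upsilon>\<^sup>2) \<and>
         (\<exists>\<rr>. t * R / 2 < \<rr> \<and> \<rr> < t * R \<and>
              (\<forall>w. norm w = \<rr> \<longrightarrow> wedge_sq_ratio H w = 2 * \<upsilon>\<^sup>2)))))"
proof -
  obtain M where "\<forall>x. \<bar>deriv cutoff x\<bar> \<le> M" using deriv_cutoff_bounded by blast
  moreover define A where "A = M + 2"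
  ultimately have bound: "\<forall>x. \<bar>deriv cutoff x\<bar> \<le> A - 2" and A: "A > 0" by (auto dest: spec[of _ 0])
  obtain s\<^sub>0 where s\<^sub>0: "A \<le> s\<^sub>0" "s\<^sub>0 \<le> 2 * A" "0 < volume_ratio A s\<^sub>0" "volume_ratio A s\<^sub>0 < 1"
    "\<forall>s>0. volume_ratio A s\<^sub>0 \<le> volume_ratio A s"
    using volume_ratio_minimum[OF bound] by blast
  define R where "R = sqrt (3 * A)"
  define \<upsilon> where "\<upsilon> = sqrt (volume_ratio A s\<^sub>0)"
  have "R / 2 = sqrt (3 * A / 4)" by (simp add: R_def real_sqrt_divide)
  with A s\<^sub>0(1) have "R / 2 < sqrt s\<^sub>0" by simp
  with A s\<^sub>0(2) have R: "R > 0" "R\<^sup>2 < 4 * A" "2 * A < R\<^sup>2" "R / 2 < sqrt s\<^sub>0" "sqrt s\<^sub>0 < R"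
    by (simp_all add: R_def)
  have \<upsilon>: "0 < \<upsilon>" "\<upsilon> < 1" "\<upsilon>\<^sup>2 = volume_ratio A s\<^sub>0" using s\<^sub>0 by (simp_all add: \<upsilon>_def)
  show ?thesis
    apply (rule exI[of _ R])
    apply (intro conjI R(1) exI[of _ \<upsilon>] \<upsilon>(1,2) allI impI)
    subgoal for t
      using glued_form_closed[OF A, of t] glued_form_hermitian glued_form_pm_invariant
        glued_form_positive[OF bound, of t] glued_form_eq_EH_form_ball[OF A _ R(2)]
        glued_form_flat_outside_ball[OF A _ _ R(3)] wedge_sq_ratio_glued_form[OF A, of t]
        wedge_sq_ratio_glued_form_sphere[OF A, of t s\<^sub>0] R(1,4,5) s\<^sub>0(1,5) A
      by (intro exI[of _ "glued_form A t"] conjI exI[of _ "t * sqrt s\<^sub>0"] allI impI) (auto simp: \<upsilon>(3))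
    done
qed

end
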